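(* For every $\lambda\in P^+$, $\mathrm{Stab}_{\mathcal W}(\lambda):=\{w\in\mathcal W:w(\lambda)=\lambda\}$ equals the submonoid of $\mathcal W$ generated by those $r_i$, $i\in I$, with $\alpha_i^\vee(\lambda)=0$.
   Context: $I$ countable, $A=(a_{ij})$ a Borcherds–Cartan matrix ($a_{ii}=2$ or $a_{ii}\in\mathbb Z_{\le 0}$; $a_{ij}\in\mathbb Z_{\le0}$ for $i\ne j$; $a_{ij}=0\iff a_{ji}=0$), $I^{re}=\{a_{ii}=2\}$, $I^{im}=I\setminus I^{re}$. Datum $(A,\{\alpha_i\},\{\alpha_i^\vee\},P,P^\vee)$: $P^\vee$ free $\mathbb Z$-module, $P=\mathrm{Hom}(P^\vee,\mathbb Z)$, $\mathfrak h=P^\vee\otimes\mathbb C$, $\alpha_i^\vee(\alpha_j)=a_{ij}$, $\{\alpha_i^\vee\}$ and $\{\alpha_i\}$ linearly independent; $P^+=\{\lambda\in P:\alpha_i^\vee(\lambda)\ge0\ \forall i\}$. $r_i(\mu)=\mu-\alpha_i^\vee(\mu)\alpha_i$. The monoid $\mathcal W$ is generated by $r_i$ ($i\in I$) with relations $r_i^2=1$ ($i\in I^{re}$), $(r_ir_j)^m=(r_jr_i)^m=1$ for $i\neq j\in I^{re}$ when $r_ir_j\in GL(\mathfrak h^* )$ has order $m\in\{2,3,4,6\}$, and $r_ir_j=r_jr_i$ for $i\in I^{im}$, $j\in I\setminus\{i\}$ with $a_{ij}=0$; it acts on $\mathfrak h^*$ via $r_i\mapsto r_i$. *)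

theory Defs
  imports Complex_Main "HOL-Library.Countable"
begin

text \<open>The free Z-module P^vee is modelled as the finitely supported
functions 'b => int (basis indexed by 'b); P = Hom(P^vee, Z) = 'b => int;
h = P^vee (x) C = finitely supported 'b => complex; h^* = Hom(h, C) = 'b => complex.
Coroots cor i :: 'b => int (finitely supported), roots rt i :: 'b => int.\<close>

definition pairZ :: "('b \<Rightarrow> int) \<Rightarrow> ('b \<Rightarrow> int) \<Rightarrow> int" where
  "pairZ h \<mu> = (\<Sum>b\<in>{b. h b \<noteq> 0}. h b * \<mu> b)"

definition pairC :: "('b \<Rightarrow> int) \<Rightarrow> ('b \<Rightarrow> complex) \<Rightarrow> complex" where
  "pairC h \<mu> = (\<Sum>b\<in>{b. h b \<noteq> 0}. of_int (h b) * \<mu> b)"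

definition BC_matrix :: "('i \<Rightarrow> 'i \<Rightarrow> int) \<Rightarrow> bool" where
  "BC_matrix A \<longleftrightarrow>
     (\<forall>i. A i i = 2 \<or> A i i \<le> 0) \<and>
     (\<forall>i j. i \<noteq> j \<longrightarrow> A i j \<le> 0) \<and>
     (\<forall>i j. A i j = 0 \<longleftrightarrow> A j i = 0)"

definition lin_indep_C :: "('i \<Rightarrow> 'b \<Rightarrow> int) \<Rightarrow> bool" where
  "lin_indep_C v \<longleftrightarrow>
     (\<forall>S (c :: 'i \<Rightarrow> complex). finite S \<longrightarrow>
        (\<forall>b. (\<Sum>i\<in>S. c i * of_int (v i b)) = 0) \<longrightarrow> (\<forall>i\<in>S. c i = 0))"

definition is_datum :: "('i \<Rightarrow> 'i \<Rightarrow> int) \<Rightarrow> ('i \<Rightarrow> 'b \<Rightarrow> int) \<Rightarrow> ('i \<Rightarrow> 'b \<Rightarrow> int) \<Rightarrow> bool" where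
  "is_datum A cor rt \<longleftrightarrow>
     (\<forall>i. finite {b. cor i b \<noteq> 0}) \<and>
     (\<forall>i j. pairZ (cor i) (rt j) = A i j) \<and>
     lin_indep_C cor \<and> lin_indep_C rt"

definition refl_map :: "('i \<Rightarrow> 'b \<Rightarrow> int) \<Rightarrow> ('i \<Rightarrow> 'b \<Rightarrow> int) \<Rightarrow> 'i
    \<Rightarrow> ('b \<Rightarrow> complex) \<Rightarrow> ('b \<Rightarrow> complex)" where
  "refl_map cor rt i \<mu> = (\<lambda>b. \<mu> b - pairC (cor i) \<mu> * of_int (rt i b))"

text \<open>Action of a word [i1,...,ik] (representing r_i1 ... r_ik) on h^*.\<close>
fun word_act :: "('i \<Rightarrow> 'b \<Rightarrow> int) \<Rightarrow> ('i \<Rightarrow> 'b \<Rightarrow> int) \<Rightarrow> 'i list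
    \<Rightarrow> ('b \<Rightarrow> complex) \<Rightarrow> ('b \<Rightarrow> complex)" where
  "word_act cor rt [] \<mu> = \<mu>"
| "word_act cor rt (i # w) \<mu> = refl_map cor rt i (word_act cor rt w \<mu>)"

definition has_order :: "('i \<Rightarrow> 'b \<Rightarrow> int) \<Rightarrow> ('i \<Rightarrow> 'b \<Rightarrow> int) \<Rightarrow> 'i \<Rightarrow> 'i \<Rightarrow> nat \<Rightarrow> bool" where
  "has_order cor rt i j m \<longleftrightarrow> 0 < m \<and>
     (refl_map cor rt i \<circ> refl_map cor rt j) ^^ m = id \<and>
     (\<forall>k. 0 < k \<and> k < m \<longrightarrow> (refl_map cor rt i \<circ> refl_map cor rt j) ^^ k \<noteq> id)"

inductive W_rel :: "('i \<Rightarrow> 'i \<Rightarrow> int) \<Rightarrow> ('i \<Rightarrow> 'b \<Rightarrow> int) \<Rightarrow> ('i \<Rightarrow> 'b \<Rightarrow> int)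
    \<Rightarrow> 'i list \<Rightarrow> 'i list \<Rightarrow> bool" for A cor rt where
  sq: "A i i = 2 \<Longrightarrow> W_rel A cor rt [i, i] []"
| braid1: "\<lbrakk>i \<noteq> j; A i i = 2; A j j = 2; m \<in> {2,3,4,6}; has_order cor rt i j m\<rbrakk>
      \<Longrightarrow> W_rel A cor rt (concat (replicate m [i, j])) []"
| braid2: "\<lbrakk>i \<noteq> j; A i i = 2; A j j = 2; m \<in> {2,3,4,6}; has_order cor rt i j m\<rbrakk>
      \<Longrightarrow> W_rel A cor rt (concat (replicate m [j, i])) []"
| comm: "\<lbrakk>A i i \<noteq> 2; j \<noteq> i; A i j = 0\<rbrakk> \<Longrightarrow> W_rel A cor rt [i, j] [j, i]"

text \<open>Monoid congruence on words generated by W_rel; W = words / W_eq.\<close>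
inductive W_eq :: "('i \<Rightarrow> 'i \<Rightarrow> int) \<Rightarrow> ('i \<Rightarrow> 'b \<Rightarrow> int) \<Rightarrow> ('i \<Rightarrow> 'b \<Rightarrow> int)
    \<Rightarrow> 'i list \<Rightarrow> 'i list \<Rightarrow> bool" for A cor rt where
  base: "W_rel A cor rt u v \<Longrightarrow> W_eq A cor rt (x @ u @ y) (x @ v @ y)"
| refl: "W_eq A cor rt u u"
| sym: "W_eq A cor rt u v \<Longrightarrow> W_eq A cor rt v u"
| trans: "W_eq A cor rt u v \<Longrightarrow> W_eq A cor rt v w \<Longrightarrow> W_eq A cor rt u w"

end

theory Submission
  imports Defs
begin

text \<open>For dominant lam, every w lam lies below lam, i.e. differs from it by a nonnegative
  combination of simple roots, and a word v on which the coroot of a real i is negative at v lam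
  is W-equivalent to i followed by a shorter word. Both facts are proved together by induction on
  the length of v. The essential case involves two real letters i and k and reduces to rank two:
  along the alternating words k i k ... the pairing with the coroot of i stays nonnegative unless
  a_ik a_ki < 4 and the word is at least as long as the order m of r_i r_k, which is then one of
  2, 3, 4, 6, so that the braid relation of length m applies.

  If w lam = lam, consider the first letter k of w. If the coroot of k is negative on the weight
  it acts on, k cancels against the rest of w rewritten to start with k. Otherwise r_k lowers that
  weight, so it must equal lam and k is orthogonal to lam.\<close>

lemma pairZ_diff: "pairZ h (\<lambda>b. f b - g b) = pairZ h f - pairZ h g"
  by (simp add: pairZ_def sum_subtractf algebra_simps)

lemma pairZ_mult: "pairZ h (\<lambda>b. c * f b) = c * pairZ h f"
  by (simp add: pairZ_def sum_distrib_left algebra_simps)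

lemma pairC_diff: "pairC h (\<lambda>b. f b - g b) = pairC h f - pairC h g"
  by (simp add: pairC_def sum_subtractf algebra_simps)

lemma pairC_add: "pairC h (\<lambda>b. f b + g b) = pairC h f + pairC h g"
  by (simp add: pairC_def sum.distrib algebra_simps)

lemma pairC_mult: "pairC h (\<lambda>b. c * f b) = c * pairC h f"
  by (simp add: pairC_def sum_distrib_left algebra_simps)

lemma pairC_of_int: "pairC h (of_int \<circ> \<mu>) = of_int (pairZ h \<mu>)"
  by (simp add: pairC_def pairZ_def)

lemma W_eq_append_cong: "W_eq A cor rt u v \<Longrightarrow> W_eq A cor rt (x @ u @ y) (x @ v @ y)"
proof (induction arbitrary: x y rule: W_eq.induct)
  case (base u v x' y')
  then show ?case using W_eq.base[of A cor rt u v "x @ x'" "y' @ y"] by simp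
next
  case (refl u)
  show ?case by (rule W_eq.refl)
next
  case (sym u v)
  then show ?case by (blast intro: W_eq.sym)
next
  case (trans u v w)
  then show ?case by (blast intro: W_eq.trans)
qed

lemma W_eq_Cons: "W_eq A cor rt u v \<Longrightarrow> W_eq A cor rt (k # u) (k # v)"
  using W_eq_append_cong[of A cor rt u v "[k]" "[]"] by simp

lemma W_eq_append_left: "W_eq A cor rt u v \<Longrightarrow> W_eq A cor rt (x @ u) (x @ v)"
  using W_eq_append_cong[of A cor rt u v x "[]"] by simp

lemma W_eq_append_right: "W_eq A cor rt u v \<Longrightarrow> W_eq A cor rt (u @ y) (v @ y)"
  using W_eq_append_cong[of A cor rt u v "[]" y] by simp

lemma W_rel_imp_W_eq: "W_rel A cor rt u v \<Longrightarrow> W_eq A cor rt u v"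
  using W_eq.base[of A cor rt u v "[]" "[]"] by simp

lemma word_act_append: "word_act cor rt (x @ y) \<mu> = word_act cor rt x (word_act cor rt y \<mu>)"
  by (induction x) auto

lemma Cons_concat_replicate: "x # concat (replicate m [y, x]) = concat (replicate m [x, y]) @ [x]"
  by (induction m) auto

lemma word_act_concat_replicate:
  "word_act cor rt (concat (replicate m [i, j])) = (refl_map cor rt i \<circ> refl_map cor rt j) ^^ m"
  by (induction m) (auto simp: word_act_append)

definition refl_int :: "('i \<Rightarrow> 'b \<Rightarrow> int) \<Rightarrow> ('i \<Rightarrow> 'b \<Rightarrow> int) \<Rightarrow> 'i
    \<Rightarrow> ('b \<Rightarrow> int) \<Rightarrow> ('b \<Rightarrow> int)" where
  "refl_int cor rt i \<mu> = (\<lambda>b. \<mu> b - pairZ (cor i) \<mu> * rt i b)"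

fun word_act_int :: "('i \<Rightarrow> 'b \<Rightarrow> int) \<Rightarrow> ('i \<Rightarrow> 'b \<Rightarrow> int) \<Rightarrow> 'i list
    \<Rightarrow> ('b \<Rightarrow> int) \<Rightarrow> ('b \<Rightarrow> int)" where
  "word_act_int cor rt [] \<mu> = \<mu>"
| "word_act_int cor rt (i # w) \<mu> = refl_int cor rt i (word_act_int cor rt w \<mu>)"

lemma word_act_int_append:
  "word_act_int cor rt (x @ y) \<mu> = word_act_int cor rt x (word_act_int cor rt y \<mu>)"
  by (induction x) auto

lemma refl_map_of_int: "refl_map cor rt i (of_int \<circ> \<mu>) = of_int \<circ> refl_int cor rt i \<mu>"
  by (simp add: refl_map_def refl_int_def fun_eq_iff pairC_of_int)

lemma word_act_of_int: "word_act cor rt w (of_int \<circ> \<mu>) = of_int \<circ> word_act_int cor rt w \<mu>"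
  by (induction w) (simp_all add: refl_map_of_int[unfolded comp_def])

section \<open>The dominance order\<close>

definition root_comb :: "('i \<Rightarrow> 'b \<Rightarrow> int) \<Rightarrow> (int \<times> 'i) list \<Rightarrow> 'b \<Rightarrow> int" where
  "root_comb rt xs b = (\<Sum>(c, j)\<leftarrow>xs. c * rt j b)"

definition root_coeff :: "(int \<times> 'i) list \<Rightarrow> 'i \<Rightarrow> int" where
  "root_coeff xs j = sum_list (map fst (filter (\<lambda>p. snd p = j) xs))"

lemma root_comb_Nil [simp]: "root_comb rt [] b = 0"
  by (simp add: root_comb_def)

lemma root_comb_Cons [simp]: "root_comb rt ((c, j) # xs) b = c * rt j b + root_comb rt xs b"
  by (simp add: root_comb_def)

lemma root_comb_append: "root_comb rt (xs @ ys) b = root_comb rt xs b + root_comb rt ys b"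
  by (simp add: root_comb_def)

lemma root_comb_eq_sum_root_coeff:
  assumes "finite T" "snd ` set xs \<subseteq> T"
  shows "root_comb rt xs b = (\<Sum>j\<in>T. root_coeff xs j * rt j b)"
  using assms(2)
proof (induction xs)
  case Nil
  then show ?case by (simp add: root_coeff_def)
next
  case (Cons p xs)
  obtain c j0 where p: "p = (c, j0)" by fastforce
  with Cons.prems have "j0 \<in> T" by auto
  have "(\<Sum>j\<in>T. root_coeff (p # xs) j * rt j b)
      = (\<Sum>j\<in>T. root_coeff xs j * rt j b + (if j = j0 then c * rt j0 b else 0))"
    by (rule sum.cong) (auto simp: root_coeff_def p algebra_simps)
  also have "\<dots> = (\<Sum>j\<in>T. root_coeff xs j * rt j b) + c * rt j0 b"
    using \<open>j0 \<in> T\<close> assms(1) by (simp add: sum.distrib)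
  finally show ?case using Cons by (simp add: p)
qed

lemma pairZ_root_comb: "pairZ h (root_comb rt xs) = (\<Sum>(c, j)\<leftarrow>xs. c * pairZ h (rt j))"
proof (induction xs)
  case Nil
  then show ?case by (simp add: pairZ_def root_comb_def)
next
  case (Cons p xs)
  obtain c j where p: "p = (c, j)" by fastforce
  have "root_comb rt (p # xs) = (\<lambda>b. c * rt j b - (- 1) * root_comb rt xs b)"
    by (simp add: p fun_eq_iff)
  then show ?case using Cons by (simp only: pairZ_diff pairZ_mult) (simp add: p)
qed

text \<open>Coefficients of a repeated root cannot cancel, as they are all nonnegative.\<close>
lemma root_comb_eq_0_imp_coeffs_0:
  assumes "lin_indep_C rt" "\<forall>p\<in>set xs. 0 \<le> fst p" "\<forall>b. root_comb rt xs b = 0"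
  shows "\<forall>p\<in>set xs. fst p = 0"
proof
  fix p assume p: "p \<in> set xs"
  define T where "T = snd ` set xs"
  have "finite T" by (simp add: T_def)
  have "(\<Sum>j\<in>T. of_int (root_coeff xs j) * (of_int (rt j b) :: complex)) = 0" for b
  proof -
    have "(\<Sum>j\<in>T. of_int (root_coeff xs j) * (of_int (rt j b) :: complex))
        = of_int (\<Sum>j\<in>T. root_coeff xs j * rt j b)" by simp
    also have "(\<Sum>j\<in>T. root_coeff xs j * rt j b) = 0"
      using root_comb_eq_sum_root_coeff[OF \<open>finite T\<close>, of xs rt b] assms(3) by (simp add: T_def)
    finally show ?thesis by simp
  qed
  then have "\<forall>j\<in>T. (of_int (root_coeff xs j) :: complex) = 0"
    using assms(1) \<open>finite T\<close> unfolding lin_indep_C_def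
    by (elim allE[of _ T] allE[of _ "\<lambda>j. of_int (root_coeff xs j)"]) simp
  then have "root_coeff xs (snd p) = 0" using p by (simp add: T_def)
  then have "\<forall>x\<in>set (map fst (filter (\<lambda>q. snd q = snd p) xs)). x = 0"
    using assms(2) unfolding root_coeff_def by (subst (asm) sum_list_nonneg_eq_0_iff) auto
  then show "fst p = 0" using p by auto
qed

definition weight_le :: "('i \<Rightarrow> 'b \<Rightarrow> int) \<Rightarrow> ('b \<Rightarrow> int) \<Rightarrow> ('b \<Rightarrow> int) \<Rightarrow> bool" where
  "weight_le rt \<mu> \<nu> \<longleftrightarrow>
     (\<exists>xs. (\<forall>p\<in>set xs. 0 \<le> fst p) \<and> \<mu> = (\<lambda>b. \<nu> b - root_comb rt xs b))"

lemma weight_le_refl: "weight_le rt \<mu> \<mu>"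
  unfolding weight_le_def by (rule exI[of _ "[]"]) simp

lemma weight_le_trans:
  assumes "weight_le rt \<mu> \<nu>" "weight_le rt \<nu> \<kappa>"
  shows "weight_le rt \<mu> \<kappa>"
proof -
  obtain xs ys where "\<forall>p\<in>set xs. 0 \<le> fst p" "\<mu> = (\<lambda>b. \<nu> b - root_comb rt xs b)"
    and "\<forall>p\<in>set ys. 0 \<le> fst p" "\<nu> = (\<lambda>b. \<kappa> b - root_comb rt ys b)"
    using assms unfolding weight_le_def by blast
  then show ?thesis
    unfolding weight_le_def by (intro exI[of _ "ys @ xs"]) (auto simp: root_comb_append)
qed

lemma weight_le_antisym:
  assumes "lin_indep_C rt" "weight_le rt \<mu> \<nu>" "weight_le rt \<nu> \<mu>"
  shows "\<mu> = \<nu>"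
proof -
  obtain xs ys where xs: "\<forall>p\<in>set xs. 0 \<le> fst p" "\<mu> = (\<lambda>b. \<nu> b - root_comb rt xs b)"
    and ys: "\<forall>p\<in>set ys. 0 \<le> fst p" "\<nu> = (\<lambda>b. \<mu> b - root_comb rt ys b)"
    using assms(2,3) unfolding weight_le_def by blast
  have "\<forall>b. root_comb rt (xs @ ys) b = 0"
  proof
    fix b
    have "\<mu> b = \<mu> b - root_comb rt ys b - root_comb rt xs b"
      using xs(2) ys(2) by metis
    then show "root_comb rt (xs @ ys) b = 0" by (simp add: root_comb_append)
  qed
  then have "\<forall>p\<in>set xs. fst p = 0"
    using root_comb_eq_0_imp_coeffs_0[OF assms(1), of "xs @ ys"] xs(1) ys(1) by auto
  then have "root_comb rt xs b = 0" for b
    by (induction xs) auto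
  then show ?thesis using xs(2) by simp
qed


section \<open>Reflections of a realization\<close>

locale bc_datum =
  fixes A :: "'i \<Rightarrow> 'i \<Rightarrow> int" and cor rt :: "'i \<Rightarrow> 'b \<Rightarrow> int"
  assumes BC_matrix: "BC_matrix A" and datum: "is_datum A cor rt"
begin

abbreviation W_equiv :: "'i list \<Rightarrow> 'i list \<Rightarrow> bool" (infix "\<simeq>" 50) where
  "u \<simeq> v \<equiv> W_eq A cor rt u v"

abbreviation pair :: "'i \<Rightarrow> ('b \<Rightarrow> int) \<Rightarrow> int" where
  "pair i \<mu> \<equiv> pairZ (cor i) \<mu>"

abbreviation r :: "'i \<Rightarrow> ('b \<Rightarrow> int) \<Rightarrow> ('b \<Rightarrow> int)" where
  "r \<equiv> refl_int cor rt"

abbreviation act :: "'i list \<Rightarrow> ('b \<Rightarrow> int) \<Rightarrow> ('b \<Rightarrow> int)" where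
  "act \<equiv> word_act_int cor rt"

lemmas W_equiv_trans [trans] = W_eq.trans[of A cor rt]

lemma pair_rt: "pair i (rt j) = A i j"
  using datum by (simp add: is_datum_def)

lemma lin_indep_rt: "lin_indep_C rt"
  using datum by (simp add: is_datum_def)

lemma A_offdiag_nonpos: "i \<noteq> j \<Longrightarrow> A i j \<le> 0"
  using BC_matrix by (simp add: BC_matrix_def)

lemma A_imag_nonpos: "A i i \<noteq> 2 \<Longrightarrow> A i j \<le> 0"
  using BC_matrix by (cases "i = j") (auto simp: BC_matrix_def)

lemma A_eq_0_sym: "A i j = 0 \<longleftrightarrow> A j i = 0"
  using BC_matrix by (simp add: BC_matrix_def)

lemma pairC_rt: "pairC (cor i) (\<lambda>b. of_int (rt j b)) = of_int (A i j)"
  using pairC_of_int[of "cor i" "rt j"] by (simp add: comp_def pair_rt)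

lemma pairC_refl_map:
  "pairC (cor j) (refl_map cor rt i \<mu>) = pairC (cor j) \<mu> - pairC (cor i) \<mu> * of_int (A j i)"
  unfolding refl_map_def by (simp add: pairC_diff pairC_mult pairC_rt)

lemma refl_map_involutive: "A i i = 2 \<Longrightarrow> refl_map cor rt i (refl_map cor rt i \<mu>) = \<mu>"
  by (simp add: refl_map_def[of _ _ i "refl_map cor rt i \<mu>"] pairC_refl_map fun_eq_iff)
     (simp add: refl_map_def algebra_simps)

lemma refl_map_commute:
  "A i j = 0 \<Longrightarrow> refl_map cor rt i (refl_map cor rt j \<mu>) = refl_map cor rt j (refl_map cor rt i \<mu>)"
  using A_eq_0_sym[of i j]
  by (simp add: refl_map_def[of _ _ i "refl_map cor rt j \<mu>"]
      refl_map_def[of _ _ j "refl_map cor rt i \<mu>"] pairC_refl_map fun_eq_iff)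
     (simp add: refl_map_def algebra_simps)

lemma W_rel_sound: "W_rel A cor rt u v \<Longrightarrow> word_act cor rt u = word_act cor rt v"
proof (induction rule: W_rel.induct)
  case (sq i)
  then show ?case by (simp add: fun_eq_iff refl_map_involutive)
next
  case (braid1 i j m)
  then show ?case by (simp add: word_act_concat_replicate has_order_def)
next
  case (braid2 i j m)
  have "word_act cor rt (concat (replicate m [j, i])) \<mu> = \<mu>" for \<mu>
  proof -
    have "word_act cor rt (concat (replicate m [j, i])) \<mu>
        = word_act cor rt (concat (replicate m [j, i]) @ [j]) (refl_map cor rt j \<mu>)"
      using braid2 by (simp add: word_act_append refl_map_involutive)
    also have "\<dots> = refl_map cor rt j (word_act cor rt (concat (replicate m [i, j])) (refl_map cor rt j \<mu>))"
      by (simp only: Cons_concat_replicate[symmetric]) simp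
    also have "\<dots> = \<mu>"
      using braid2 by (simp add: word_act_concat_replicate has_order_def refl_map_involutive)
    finally show ?thesis .
  qed
  then show ?case by (simp add: fun_eq_iff)
next
  case (comm i j)
  then show ?case using refl_map_commute[of i j] by (intro ext) simp
qed

lemma W_eq_sound: "u \<simeq> v \<Longrightarrow> word_act cor rt u = word_act cor rt v"
proof (induction rule: W_eq.induct)
  case (base u v x y)
  then show ?case by (auto simp: word_act_append W_rel_sound)
qed auto

lemma act_W_eq:
  assumes "u \<simeq> v"
  shows "act u \<mu> = act v \<mu>"
proof -
  have "word_act cor rt u (of_int \<circ> \<mu>) = word_act cor rt v (of_int \<circ> \<mu>)"
    using W_eq_sound[OF assms] by simp
  then have "(of_int \<circ> act u \<mu> :: 'b \<Rightarrow> complex) = of_int \<circ> act v \<mu>"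
    by (simp only: word_act_of_int)
  then show ?thesis by (simp add: fun_eq_iff)
qed

lemma pair_r: "pair j (r i \<mu>) = pair j \<mu> - pair i \<mu> * A j i"
  unfolding refl_int_def by (simp add: pairZ_diff pairZ_mult pair_rt)

lemma r_involutive: "A k k = 2 \<Longrightarrow> r k (r k \<mu>) = \<mu>"
  by (simp add: refl_int_def[of _ _ k "r k \<mu>"] pair_r fun_eq_iff) (simp add: refl_int_def)

lemma W_eq_cancel_sq: "A s s = 2 \<Longrightarrow> x @ s # s # y \<simeq> x @ y"
  using W_eq.base[OF W_rel.sq[of A s cor rt], of x y] by simp

lemma pair_le_of_weight_le_imag:
  assumes "weight_le rt \<mu> \<nu>" "A k k \<noteq> 2"
  shows "pair k \<nu> \<le> pair k \<mu>"
proof -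
  obtain xs where xs: "\<forall>p\<in>set xs. 0 \<le> fst p" "\<mu> = (\<lambda>b. \<nu> b - root_comb rt xs b)"
    using assms(1) unfolding weight_le_def by blast
  have "pair k \<mu> = pair k \<nu> - (\<Sum>(c, j)\<leftarrow>xs. c * A k j)"
    using xs(2) by (simp add: pairZ_diff pairZ_root_comb pair_rt)
  moreover have "(\<Sum>(c, j)\<leftarrow>xs. c * A k j) \<le> 0"
    using xs(1) A_imag_nonpos[OF assms(2)]
    by (intro sum_list_nonpos) (auto simp: mult_nonneg_nonpos)
  ultimately show ?thesis by simp
qed

lemma r_weight_le: "0 \<le> pair k \<mu> \<Longrightarrow> weight_le rt (r k \<mu>) \<mu>"
  unfolding weight_le_def refl_int_def
  by (intro exI[of _ "[(pair k \<mu>, k)]"]) simp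

lemma pair_eq_0_of_r_fixed:
  assumes "r k \<mu> = \<mu>"
  shows "pair k \<mu> = 0"
proof -
  have "pair k \<mu> * rt k b = 0" for b
    using fun_cong[OF assms, of b] unfolding refl_int_def by simp
  then have "\<forall>b. of_int (pair k \<mu>) * (of_int (rt k b) :: complex) = 0"
    by (metis of_int_0 of_int_mult)
  then show ?thesis
    using lin_indep_rt unfolding lin_indep_C_def
    by (elim allE[of _ "{k}"] allE[of _ "\<lambda>_. of_int (pair k \<mu>)"]) simp
qed

end


section \<open>Rank two\<close>

fun alt_word :: "'i \<Rightarrow> 'i \<Rightarrow> nat \<Rightarrow> 'i list" where
  "alt_word s t 0 = []"
| "alt_word s t (Suc n) = s # alt_word t s n"

lemma length_alt_word [simp]: "length (alt_word s t n) = n"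
  by (induction n arbitrary: s t) auto

lemma set_alt_word_subset: "set (alt_word s t n) \<subseteq> {s, t}"
  by (induction n arbitrary: s t) auto

lemma alt_word_Suc_right: "alt_word s t (Suc n) = alt_word s t n @ [if even n then s else t]"
  by (induction n arbitrary: s t) auto

lemma alt_word_add:
  "alt_word s t (n + n') = alt_word s t n @ (if even n then alt_word s t n' else alt_word t s n')"
  by (induction n arbitrary: s t) auto

lemma rev_alt_word: "rev (alt_word s t n) = (if odd n then alt_word s t n else alt_word t s n)"
proof (induction n arbitrary: s t)
  case 0
  then show ?case by simp
next
  case (Suc n)
  have "rev (alt_word s t (Suc n)) = (if odd n then alt_word t s n else alt_word s t n) @ [s]"
    using Suc[of t s] by simp
  also have "\<dots> = (if odd (Suc n) then alt_word s t (Suc n) else alt_word t s (Suc n))"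
    using alt_word_Suc_right[of s t n] alt_word_Suc_right[of t s n] by simp
  finally show ?case .
qed

lemma concat_replicate_eq_alt_word: "concat (replicate m [s, t]) = alt_word s t (2 * m)"
  by (induction m) auto

text \<open>With a = a_ik and b = a_ki, the pairing of the coroot of i with (alt_word k i L) applied to
  a weight is p times its pairing with that coroot plus q times its pairing with the coroot of k,
  where (p, q) = alt_coeffs a b L.\<close>
fun alt_coeffs :: "int \<Rightarrow> int \<Rightarrow> nat \<Rightarrow> int \<times> int" where
  "alt_coeffs a b 0 = (1, 0)"
| "alt_coeffs a b (Suc L) =
    (let (p, q) = alt_coeffs a b L in if even L then (p, - q - p * a) else (- p - q * b, q))"

text \<open>The third conjunct is the invariant that carries the induction.\<close>
lemma alt_coeffs_nonneg_if_4_le: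
  assumes "a \<le> 0" "b \<le> 0" "4 \<le> a * b"
  shows "0 \<le> fst (alt_coeffs a b L) \<and> 0 \<le> snd (alt_coeffs a b L) \<and>
    (if even L then 2 * snd (alt_coeffs a b L) \<le> - a * fst (alt_coeffs a b L)
     else 2 * fst (alt_coeffs a b L) \<le> - b * snd (alt_coeffs a b L))"
proof (induction L)
  case 0
  then show ?case using assms by simp
next
  case (Suc L)
  obtain p q where pq: "alt_coeffs a b L = (p, q)" by fastforce
  show ?case
  proof (cases "even L")
    case True
    then have h: "0 \<le> p" "0 \<le> q" "2 * q \<le> - a * p" using Suc pq by auto
    have "- b * (2 * q) \<le> - b * (- a * p)" using h(3) assms(2) by (intro mult_left_mono) auto
    moreover have "4 * p \<le> a * b * p" using assms(3) h(1) by (intro mult_right_mono) auto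
    ultimately have "2 * p \<le> - b * (- q - p * a)" by (simp add: algebra_simps)
    then show ?thesis using True pq h by (auto simp: algebra_simps)
  next
    case False
    then have h: "0 \<le> p" "0 \<le> q" "2 * p \<le> - b * q" using Suc pq by auto
    have "- a * (2 * p) \<le> - a * (- b * q)" using h(3) assms(1) by (intro mult_left_mono) auto
    moreover have "4 * q \<le> a * b * q" using assms(3) h(2) by (intro mult_right_mono) auto
    ultimately have "2 * q \<le> - a * (- p - q * b)" by (simp add: algebra_simps)
    then show ?thesis using False pq h by (auto simp: algebra_simps)
  qed
qed

lemma cartan_rank2_finite_cases:
  fixes a b :: int
  assumes "a \<le> 0" "b \<le> 0" "a * b < 4" "a = 0 \<longleftrightarrow> b = 0"
  shows "(a, b) \<in> {(0, 0), (-1, -1), (-1, -2), (-2, -1), (-1, -3), (-3, -1)}"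
proof (cases "a = 0")
  case True
  then show ?thesis using assms by auto
next
  case False
  then have "a \<le> -1" "b \<le> -1" using assms by auto
  have "- a \<le> a * b" using mult_left_mono_neg[OF \<open>b \<le> -1\<close>, of a] \<open>a \<le> -1\<close> by simp
  moreover have "- b \<le> a * b" using mult_right_mono_neg[OF \<open>a \<le> -1\<close>, of b] \<open>b \<le> -1\<close> by simp
  ultimately have "a \<in> {-3, -2, -1}" "b \<in> {-3, -2, -1}"
    using \<open>a \<le> -1\<close> \<open>b \<le> -1\<close> assms(3) by auto
  then show ?thesis using assms(3) by auto
qed

text \<open>The order of r_i r_k for real i \<noteq> k with a_ik a_ki < 4.\<close>
definition dihedral_order :: "int \<Rightarrow> nat" where
  "dihedral_order n = (if n = 0 then 2 else if n = 1 then 3 else if n = 2 then 4 else 6)"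

lemma dihedral_order_in: "dihedral_order n \<in> {2, 3, 4, 6}"
  by (simp add: dihedral_order_def)

lemma alt_coeffs_nonneg_below_dihedral_order:
  fixes a b :: int
  assumes "a \<le> 0" "b \<le> 0" "a * b < 4" "a = 0 \<longleftrightarrow> b = 0" "L < dihedral_order (a * b)"
  shows "0 \<le> fst (alt_coeffs a b L) \<and> 0 \<le> snd (alt_coeffs a b L)"
proof -
  have "L \<in> {0, 1, 2, 3, 4, 5}"
    using assms(5) by (auto simp: dihedral_order_def split: if_splits)
  then show ?thesis
    using cartan_rank2_finite_cases[OF assms(1-4)] assms(5)
    by (auto simp: dihedral_order_def numeral_eq_Suc)
qed

text \<open>Effect of r_i r_k on the coefficients (c1, c2) of mu0 - c1 alpha_i - c2 alpha_k, where
  X0, Y0 are the pairings of mu0 with the coroots of i, k, and a = a_ik, b = a_ki.\<close>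
fun rot_coeff_step :: "complex \<Rightarrow> complex \<Rightarrow> complex \<Rightarrow> complex \<Rightarrow> complex \<times> complex
    \<Rightarrow> complex \<times> complex" where
  "rot_coeff_step X0 Y0 a b (c1, c2) =
    (let c2' = Y0 - c1 * b - c2 in (X0 - c1 - c2' * a, c2'))"

text \<open>Effect of r_i r_k on the pair of pairings with the coroots of i and k.\<close>
fun rot_pair_step :: "complex \<Rightarrow> complex \<Rightarrow> complex \<times> complex \<Rightarrow> complex \<times> complex" where
  "rot_pair_step a b (X, Y) = (Y * a - X, Y * a * b - Y - X * b)"

context bc_datum
begin

lemma pair_act_alt_word:
  assumes "A i i = 2" "A k k = 2"
  shows "pair i (act (alt_word k i L) \<nu>)
    = fst (alt_coeffs (A i k) (A k i) L) * pair i \<nu> + snd (alt_coeffs (A i k) (A k i) L) * pair k \<nu>"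
proof (induction L arbitrary: \<nu>)
  case 0
  then show ?case by simp
next
  case (Suc L)
  obtain p q where pq: "alt_coeffs (A i k) (A k i) L = (p, q)" by fastforce
  have act_Suc: "act (alt_word k i (Suc L)) \<nu> = act (alt_word k i L) (r (if even L then k else i) \<nu>)"
    by (simp only: alt_word_Suc_right word_act_int_append) simp
  show ?case
  proof (cases "even L")
    case True
    have "pair i (act (alt_word k i (Suc L)) \<nu>) = p * pair i (r k \<nu>) + q * pair k (r k \<nu>)"
      using act_Suc Suc pq True by simp
    also have "\<dots> = p * pair i \<nu> + (- q - p * A i k) * pair k \<nu>"
      using assms by (simp add: pair_r algebra_simps)
    finally show ?thesis using pq True by simp
  next
    case False
    have "pair i (act (alt_word k i (Suc L)) \<nu>) = p * pair i (r i \<nu>) + q * pair k (r i \<nu>)"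
      using act_Suc Suc pq False by simp
    also have "\<dots> = (- p - q * A k i) * pair i \<nu> + q * pair k \<nu>"
      using assms by (simp add: pair_r algebra_simps)
    finally show ?thesis using pq False by simp
  qed
qed

definition sub_roots :: "'i \<Rightarrow> 'i \<Rightarrow> ('b \<Rightarrow> complex) \<Rightarrow> complex \<times> complex \<Rightarrow> 'b \<Rightarrow> complex" where
  "sub_roots i k \<mu>0 c = (\<lambda>b. \<mu>0 b - (fst c * of_int (rt i b) + snd c * of_int (rt k b)))"

lemma rot_sub_roots:
  assumes "i \<noteq> k" "A i i = 2" "A k k = 2"
  shows "refl_map cor rt i (refl_map cor rt k (sub_roots i k \<mu>0 c))
    = sub_roots i k \<mu>0 (rot_coeff_step (pairC (cor i) \<mu>0) (pairC (cor k) \<mu>0) (of_int (A i k)) (of_int (A k i)) c)"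
proof -
  have pair_sub_roots: "pairC (cor j) (sub_roots i k \<mu>0 c)
      = pairC (cor j) \<mu>0 - (fst c * of_int (A j i) + snd c * of_int (A j k))" for j c
    unfolding sub_roots_def by (simp add: pairC_diff pairC_add pairC_mult pairC_rt)
  have "refl_map cor rt j (sub_roots i k \<mu>0 c) = sub_roots i k \<mu>0
      (if j = i then (fst c + pairC (cor i) (sub_roots i k \<mu>0 c), snd c)
       else (fst c, snd c + pairC (cor k) (sub_roots i k \<mu>0 c)))"
    if "j = i \<or> j = k" for j c
    using that unfolding refl_map_def[of _ _ j] sub_roots_def[of i k \<mu>0 "(_, _)"]
    by (auto simp: sub_roots_def algebra_simps)
  then show ?thesis
    using assms by (cases c) (simp add: pair_sub_roots Let_def algebra_simps)
qed

lemma funpow_rot_sub_roots: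
  assumes "i \<noteq> k" "A i i = 2" "A k k = 2"
  shows "((refl_map cor rt i \<circ> refl_map cor rt k) ^^ n) (sub_roots i k \<mu>0 c)
    = sub_roots i k \<mu>0
        ((rot_coeff_step (pairC (cor i) \<mu>0) (pairC (cor k) \<mu>0) (of_int (A i k)) (of_int (A k i)) ^^ n) c)"
  by (induction n) (simp_all add: rot_sub_roots[OF assms])

lemma pairs_funpow_rot:
  assumes "A i i = 2" "A k k = 2"
  shows "(pairC (cor i) (((refl_map cor rt i \<circ> refl_map cor rt k) ^^ n) \<mu>),
          pairC (cor k) (((refl_map cor rt i \<circ> refl_map cor rt k) ^^ n) \<mu>))
    = (rot_pair_step (of_int (A i k)) (of_int (A k i)) ^^ n) (pairC (cor i) \<mu>, pairC (cor k) \<mu>)"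
proof (induction n)
  case (Suc n)
  then show ?case by (simp add: pairC_refl_map assms algebra_simps flip: Suc)
qed simp

text \<open>(2, a_ki) are the pairings of alpha_i itself with the coroots of i and k.\<close>
lemma has_order_if_rot_steps:
  assumes "i \<noteq> k" "A i i = 2" "A k k = 2" "0 < m"
    and id_m: "\<And>X0 Y0. (rot_coeff_step X0 Y0 (of_int (A i k)) (of_int (A k i)) ^^ m) (0, 0) = (0, 0)"
    and not_id: "\<And>j. 0 < j \<Longrightarrow> j < m \<Longrightarrow>
      (rot_pair_step (of_int (A i k)) (of_int (A k i)) ^^ j) (2, of_int (A k i)) \<noteq> (2, of_int (A k i))"
  shows "has_order cor rt i k m"
  unfolding has_order_def
proof (intro conjI allI impI)
  show "0 < m" by fact
  have "sub_roots i k \<mu> (0, 0) = \<mu>" for \<mu>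
    by (simp add: sub_roots_def)
  then show "(refl_map cor rt i \<circ> refl_map cor rt k) ^^ m = id"
    using funpow_rot_sub_roots[OF assms(1-3), of m _ "(0, 0)"] id_m by auto
next
  fix j assume j: "0 < j \<and> j < m"
  let ?\<alpha> = "\<lambda>b. (of_int (rt i b) :: complex)"
  have "pairC (cor i) ?\<alpha> = 2" "pairC (cor k) ?\<alpha> = of_int (A k i)"
    using assms(2) by (simp_all add: pairC_rt)
  then show "(refl_map cor rt i \<circ> refl_map cor rt k) ^^ j \<noteq> id"
    using pairs_funpow_rot[OF assms(2,3), of j ?\<alpha>] not_id[of j] j by auto
qed

lemma has_order_dihedral_order:
  assumes "i \<noteq> k" "A i i = 2" "A k k = 2" "A i k * A k i < 4"
  shows "has_order cor rt i k (dihedral_order (A i k * A k i))"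
proof (rule has_order_if_rot_steps[OF assms(1-3)])
  have cases: "(A i k, A k i) \<in> {(0, 0), (-1, -1), (-1, -2), (-2, -1), (-1, -3), (-3, -1)}"
    using cartan_rank2_finite_cases assms A_eq_0_sym A_offdiag_nonpos by metis
  show "0 < dihedral_order (A i k * A k i)"
    by (simp add: dihedral_order_def)
  show "(rot_coeff_step X0 Y0 (of_int (A i k)) (of_int (A k i)) ^^ dihedral_order (A i k * A k i)) (0, 0)
      = (0, 0)" for X0 Y0
    using cases by (auto simp: dihedral_order_def numeral_eq_Suc algebra_simps)
  show "(rot_pair_step (of_int (A i k)) (of_int (A k i)) ^^ j) (2, of_int (A k i)) \<noteq> (2, of_int (A k i))"
    if "0 < j" "j < dihedral_order (A i k * A k i)" for j
  proof -
    have "j \<in> {1, 2, 3, 4, 5}"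
      using that by (auto simp: dihedral_order_def split: if_splits)
    then show ?thesis
      using cases that by (auto simp: dihedral_order_def numeral_eq_Suc algebra_simps)
  qed
qed


lemma W_eq_append_rev_Nil: "\<forall>s\<in>set z. A s s = 2 \<Longrightarrow> z @ rev z \<simeq> []"
proof (induction z)
  case Nil
  then show ?case by (simp add: W_eq.refl)
next
  case (Cons s z)
  have "[s] @ (z @ rev z) @ [s] \<simeq> [s] @ [] @ [s]"
    by (rule W_eq_append_cong) (use Cons in simp)
  also have "[s] @ [] @ [s] \<simeq> []"
    using W_eq_cancel_sq[of s "[]" "[]"] Cons.prems by simp
  finally show ?case by simp
qed

text \<open>From the relation (r_k r_i)^m = 1: cancel the second half alt_word k i m @ z against
  rev z = alt_word i k m.\<close>
lemma W_eq_braid: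
  assumes "i \<noteq> k" "A i i = 2" "A k k = 2" "m \<in> {2, 3, 4, 6}" "has_order cor rt i k m"
  shows "alt_word k i m \<simeq> alt_word i k m"
proof -
  define z where "z = (if even m then alt_word k i m else alt_word i k m)"
  have rel: "alt_word k i m @ z \<simeq> []"
    using W_rel_imp_W_eq[OF W_rel.braid2[where A=A and i=i and j=k, OF assms]]
    by (simp add: concat_replicate_eq_alt_word mult_2 alt_word_add z_def)
  have "set z \<subseteq> {k, i}"
    unfolding z_def using set_alt_word_subset[of k i m] set_alt_word_subset[of i k m] by auto
  then have "\<forall>s\<in>set z. A s s = 2" using assms(2,3) by auto
  then have "alt_word k i m @ [] \<simeq> alt_word k i m @ (z @ rev z)"
    by (rule W_eq_append_left[OF W_eq.sym[OF W_eq_append_rev_Nil]])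
  also have "alt_word k i m @ (z @ rev z) \<simeq> [] @ rev z"
    using W_eq_append_right[OF rel, of "rev z"] by simp
  also have "rev z = alt_word i k m"
    by (simp add: z_def rev_alt_word)
  finally show ?thesis by simp
qed

text \<open>Since alt_coeffs stays nonnegative below the order of r_i r_k, and forever when
  a_ik a_ki \<ge> 4, the hypotheses force L to be at least that order, and the braid relation
  rewrites alt_word k i L to start with i.\<close>
lemma alt_word_exchange:
  assumes "i \<noteq> k" "A i i = 2" "A k k = 2" "0 \<le> pair i \<nu>" "0 \<le> pair k \<nu>"
    and "pair i (act (alt_word k i L) \<nu>) < 0"
  shows "\<exists>t. alt_word k i L \<simeq> i # t \<and> length t = L - 1"
proof -
  let ?a = "A i k" and ?b = "A k i"
  have ab: "?a \<le> 0" "?b \<le> 0" using A_offdiag_nonpos assms(1) by auto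
  have neg: "fst (alt_coeffs ?a ?b L) < 0 \<or> snd (alt_coeffs ?a ?b L) < 0"
  proof (rule ccontr)
    assume "\<not> ?thesis"
    then have "0 \<le> fst (alt_coeffs ?a ?b L) * pair i \<nu>" "0 \<le> snd (alt_coeffs ?a ?b L) * pair k \<nu>"
      using assms(4,5) by auto
    then show False using assms(6) pair_act_alt_word[OF assms(2,3), of L \<nu>] by simp
  qed
  have small: "?a * ?b < 4"
  proof (rule ccontr)
    assume "\<not> ?a * ?b < 4"
    then show False using alt_coeffs_nonneg_if_4_le[OF ab, of L] neg by auto
  qed
  define m where "m = dihedral_order (?a * ?b)"
  have "m \<le> L"
  proof (rule ccontr)
    assume "\<not> m \<le> L"
    then show False
      using alt_coeffs_nonneg_below_dihedral_order[OF ab small A_eq_0_sym, of L] neg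
      unfolding m_def by auto
  qed
  have m: "m \<in> {2, 3, 4, 6}" "has_order cor rt i k m"
    unfolding m_def using dihedral_order_in has_order_dihedral_order[OF assms(1-3) small] by auto
  then obtain m' where "m = Suc m'" by (cases m) auto
  have "alt_word k i L = alt_word k i m @ (if even m then alt_word k i (L - m) else alt_word i k (L - m))"
    using alt_word_add[of k i m "L - m"] \<open>m \<le> L\<close> by simp
  also have "\<dots> \<simeq> alt_word i k m @ (if even m then alt_word k i (L - m) else alt_word i k (L - m))"
    by (rule W_eq_append_right[OF W_eq_braid[OF assms(1-3) m]])
  finally show ?thesis
    using \<open>m = Suc m'\<close> \<open>m \<le> L\<close>
    by (intro exI[of _ "alt_word k i m' @ (if even m then alt_word k i (L - m) else alt_word i k (L - m))"])
      simp
qed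

lemma pair_r_r_nonneg:
  assumes "i \<noteq> k" "A i i = 2" "A i k \<noteq> 0" "0 \<le> pair i \<nu>" "0 \<le> pair k \<nu>"
  shows "0 \<le> pair i (r k (r i \<nu>))"
proof -
  have "A i k \<le> -1" "A k i \<le> -1"
    using assms(1,3) A_offdiag_nonpos[of i k] A_offdiag_nonpos[of k i] A_eq_0_sym[of i k] by auto
  then have "1 \<le> A i k * A k i"
    using mult_mono[of 1 "- A i k" 1 "- A k i"] by simp
  then have "pair i \<nu> \<le> pair i \<nu> * (A i k * A k i)"
    using assms(4) mult_left_mono[of 1 "A i k * A k i" "pair i \<nu>"] by simp
  moreover have "pair k \<nu> * A i k \<le> 0"
    using assms(5) \<open>A i k \<le> -1\<close> by (simp add: mult_nonneg_nonpos)
  ultimately show ?thesis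
    using assms(2) by (simp add: pair_r algebra_simps)
qed

end


section \<open>The exchange property at a dominant weight\<close>

locale dominant_weight = bc_datum A cor rt
  for A :: "'i \<Rightarrow> 'i \<Rightarrow> int" and cor rt :: "'i \<Rightarrow> 'b \<Rightarrow> int" +
  fixes lam :: "'b \<Rightarrow> int"
  assumes dominant: "\<forall>i. 0 \<le> pair i lam"
begin

definition left_exchange :: "'i list \<Rightarrow> bool" where
  "left_exchange v \<longleftrightarrow> (\<forall>i. A i i = 2 \<longrightarrow> pair i (act v lam) < 0 \<longrightarrow>
     (\<exists>v'. v \<simeq> i # v' \<and> length v' < length v))"

lemma pair_nonneg_imag: "weight_le rt \<mu> lam \<Longrightarrow> A k k \<noteq> 2 \<Longrightarrow> 0 \<le> pair k \<mu>"
  using pair_le_of_weight_le_imag dominant order_trans by blast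

text \<open>The letters of u are moved one at a time to the alternating prefix or
  cancelled against it, until both pairings of the remaining weight are nonnegative
  and alt_word_exchange applies.\<close>
lemma left_exchange_alt_word_append:
  assumes IH: "\<forall>y. length y < n \<longrightarrow> left_exchange y"
    and ik: "i \<noteq> k" "A i i = 2" "A k k = 2"
    and "1 \<le> L" "L + length u \<le> n" "pair i (act (alt_word k i L @ u) lam) < 0"
  shows "\<exists>t. alt_word k i L @ u \<simeq> i # t \<and> length t < L + length u"
  using assms(5-7)
proof (induction "length u" arbitrary: u L rule: less_induct)
  case less
  define \<nu> where "\<nu> = act u lam"
  obtain L' where L': "L = Suc L'" using \<open>1 \<le> L\<close> by (cases L) auto
  define t where "t = (if even L' then k else i)"
  define s where "s = (if even L then k else i)"
  have alt_last: "alt_word k i L = alt_word k i L' @ [t]"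
    unfolding L' t_def by (rule alt_word_Suc_right)
  have alt_next: "alt_word k i (Suc L) = alt_word k i L @ [s]"
    unfolding s_def by (rule alt_word_Suc_right)
  have ts: "A t t = 2" "A s s = 2" using ik by (auto simp: t_def s_def)
  have exch_u: "left_exchange u" using IH less.prems(1,2) by simp
  have neg: "pair i (act (alt_word k i L) \<nu>) < 0"
    using less.prems(3) by (simp add: word_act_int_append \<nu>_def)
  consider "pair t \<nu> < 0" | "pair s \<nu> < 0" | "0 \<le> pair i \<nu>" "0 \<le> pair k \<nu>"
    using L' by (fastforce simp: t_def s_def split: if_splits)
  then show ?case
  proof cases
    case 1
    then obtain u' where u': "u \<simeq> t # u'" "length u' < length u"
      using exch_u ts(1) by (auto simp: left_exchange_def \<nu>_def)
    have "alt_word k i L @ u \<simeq> alt_word k i L' @ t # t # u'"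
      using W_eq_append_left[OF u'(1), of "alt_word k i L"] by (simp add: alt_last)
    also have "\<dots> \<simeq> alt_word k i L' @ u'"
      by (rule W_eq_cancel_sq[OF ts(1)])
    finally have red: "alt_word k i L @ u \<simeq> alt_word k i L' @ u'" .
    have neg': "pair i (act (alt_word k i L' @ u') lam) < 0"
      using less.prems(3) act_W_eq[OF red] by simp
    show ?thesis
    proof (cases "L' = 0")
      case True
      have "left_exchange u'" using IH less.prems(2) u'(2) by simp
      then obtain u'' where "u' \<simeq> i # u''" "length u'' < length u'"
        using ik(2) neg' True by (auto simp: left_exchange_def)
      then show ?thesis
        using red True u'(2) by (intro exI[of _ u'']) (auto intro: W_eq.trans)
    next
      case False
      then show ?thesis
        using less.hyps[OF u'(2), of L'] less.prems(2) u'(2) neg' red L'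
        by (auto intro: W_eq.trans)
    qed
  next
    case 2
    then obtain u' where u': "u \<simeq> s # u'" "length u' < length u"
      using exch_u ts(2) by (auto simp: left_exchange_def \<nu>_def)
    have red: "alt_word k i L @ u \<simeq> alt_word k i (Suc L) @ u'"
      unfolding alt_next using W_eq_append_left[OF u'(1), of "alt_word k i L"] by simp
    then show ?thesis
      using less.hyps[OF u'(2), of "Suc L"] less.prems(2,3) u'(2) act_W_eq[OF red]
      by (auto intro: W_eq.trans)
  next
    case 3
    then obtain t' where t': "alt_word k i L \<simeq> i # t'" "length t' = L - 1"
      using alt_word_exchange[OF ik 3 neg] by blast
    show ?thesis
      using W_eq_append_right[OF t'(1), of u] t'(2) \<open>1 \<le> L\<close>
      by (intro exI[of _ "t' @ u"]) auto
  qed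
qed

lemma act_le_lam_Cons:
  assumes IH: "\<forall>y. length y < length (k # v) \<longrightarrow> weight_le rt (act y lam) lam \<and> left_exchange y"
  shows "weight_le rt (act (k # v) lam) lam"
proof -
  define \<mu> where "\<mu> = act v lam"
  have "weight_le rt \<mu> lam" "left_exchange v" using IH by (simp_all add: \<mu>_def)
  show ?thesis
  proof (cases "0 \<le> pair k \<mu>")
    case True
    then show ?thesis
      using r_weight_le weight_le_trans \<open>weight_le rt \<mu> lam\<close> by (simp add: \<mu>_def) blast
  next
    case False
    then have "A k k = 2" using pair_nonneg_imag \<open>weight_le rt \<mu> lam\<close> by fastforce
    then obtain v' where v': "v \<simeq> k # v'" "length v' < length v"
      using \<open>left_exchange v\<close> False by (auto simp: left_exchange_def \<mu>_def)
    have "act (k # v) lam = act v' lam"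
      using act_W_eq[OF v'(1)] r_involutive[OF \<open>A k k = 2\<close>] by simp
    then show ?thesis using IH v'(2) by simp
  qed
qed

lemma left_exchange_Cons_imag:
  assumes IH: "\<forall>y. length y < length (k # v) \<longrightarrow> weight_le rt (act y lam) lam \<and> left_exchange y"
    and i: "A i i = 2" and k: "k \<noteq> i" "A k k \<noteq> 2"
    and neg: "pair i (act (k # v) lam) < 0"
  shows "\<exists>v'. k # v \<simeq> i # v' \<and> length v' < length (k # v)"
proof -
  define \<mu> where "\<mu> = act v lam"
  have "weight_le rt \<mu> lam" "left_exchange v" using IH by (simp_all add: \<mu>_def)
  then have "0 \<le> pair k \<mu>" using pair_nonneg_imag k by simp
  moreover have "A i k \<le> 0" using A_offdiag_nonpos k by simp
  ultimately have "pair i \<mu> < 0"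
    using neg pair_r[of i k \<mu>] mult_nonneg_nonpos[of "pair k \<mu>" "A i k"] by (simp add: \<mu>_def)
  then obtain v' where v': "v \<simeq> i # v'" "length v' < length v"
    using \<open>left_exchange v\<close> i by (auto simp: left_exchange_def \<mu>_def)
  show ?thesis
  proof (cases "A i k = 0")
    case True
    have "k # v \<simeq> [] @ [k, i] @ v'"
      using W_eq_Cons[OF v'(1)] by simp
    also have "\<dots> \<simeq> [] @ [i, k] @ v'"
      using k True A_eq_0_sym[of i k] by (intro W_eq.base W_rel.comm) auto
    finally show ?thesis using v'(2) by (intro exI[of _ "k # v'"]) simp
  next
    case False
    define \<nu> where "\<nu> = act v' lam"
    have "\<mu> = r i \<nu>" using act_W_eq[OF v'(1)] by (simp add: \<mu>_def \<nu>_def)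
    have "0 \<le> pair k \<nu>" using IH v'(2) pair_nonneg_imag k by (simp add: \<nu>_def)
    moreover have "0 \<le> pair i \<nu>"
      using \<open>pair i \<mu> < 0\<close> \<open>\<mu> = r i \<nu>\<close> i by (simp add: pair_r)
    ultimately have "0 \<le> pair i (r k (r i \<nu>))"
      using pair_r_r_nonneg[of i k \<nu>] k i False by simp
    then show ?thesis using neg \<open>\<mu> = r i \<nu>\<close> by (simp add: \<mu>_def)
  qed
qed

lemma left_exchange_Cons:
  assumes IH: "\<forall>y. length y < length (k # v) \<longrightarrow> weight_le rt (act y lam) lam \<and> left_exchange y"
  shows "left_exchange (k # v)"
  unfolding left_exchange_def
proof (intro allI impI)
  fix i assume i: "A i i = 2" and neg: "pair i (act (k # v) lam) < 0"
  consider "k = i" | "k \<noteq> i" "A k k = 2" | "k \<noteq> i" "A k k \<noteq> 2" by blast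
  then show "\<exists>v'. k # v \<simeq> i # v' \<and> length v' < length (k # v)"
  proof cases
    case 1
    then show ?thesis by (auto intro: W_eq.refl)
  next
    case 2
    then show ?thesis
      using left_exchange_alt_word_append[of "length (k # v)" i k 1 v] IH i neg by simp
  next
    case 3
    then show ?thesis using left_exchange_Cons_imag IH i neg by blast
  qed
qed

lemma act_le_lam_and_left_exchange: "weight_le rt (act v lam) lam \<and> left_exchange v"
proof (induction "length v" arbitrary: v rule: less_induct)
  case less
  show ?case
  proof (cases v)
    case Nil
    then show ?thesis using dominant by (simp add: weight_le_refl left_exchange_def not_less)
  next
    case (Cons k v')
    then show ?thesis using less act_le_lam_Cons left_exchange_Cons by blast
  qed
qed

lemma fixed_imp_W_eq_parabolic_word:
  "act w lam = lam \<Longrightarrow> \<exists>w'. w \<simeq> w' \<and> set w' \<subseteq> {i. pair i lam = 0}"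
proof (induction "length w" arbitrary: w rule: less_induct)
  case less
  show ?case
  proof (cases w)
    case Nil
    then show ?thesis by (auto intro: W_eq.refl)
  next
    case (Cons k w1)
    define \<mu> where "\<mu> = act w1 lam"
    have "weight_le rt \<mu> lam" "left_exchange w1"
      using act_le_lam_and_left_exchange by (simp_all add: \<mu>_def)
    have fixed: "r k \<mu> = lam" using less.prems Cons by (simp add: \<mu>_def)
    show ?thesis
    proof (cases "0 \<le> pair k \<mu>")
      case True
      have "weight_le rt lam \<mu>" using r_weight_le[OF True] fixed by simp
      then have "\<mu> = lam"
        using weight_le_antisym[OF lin_indep_rt \<open>weight_le rt \<mu> lam\<close>] by simp
      then have "pair k lam = 0" using fixed pair_eq_0_of_r_fixed by simp
      obtain w1' where "w1 \<simeq> w1'" "set w1' \<subseteq> {i. pair i lam = 0}"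
        using less.hyps[of w1] Cons \<open>\<mu> = lam\<close> by (auto simp: \<mu>_def)
      then show ?thesis
        using W_eq_Cons \<open>pair k lam = 0\<close> Cons by (intro exI[of _ "k # w1'"]) auto
    next
      case False
      then have "A k k = 2" using pair_nonneg_imag \<open>weight_le rt \<mu> lam\<close> by fastforce
      then obtain w2 where w2: "w1 \<simeq> k # w2" "length w2 < length w1"
        using \<open>left_exchange w1\<close> False by (auto simp: left_exchange_def \<mu>_def)
      have "w \<simeq> [] @ k # k # w2"
        using Cons W_eq_Cons[OF w2(1)] by simp
      also have "\<dots> \<simeq> [] @ w2" by (rule W_eq_cancel_sq[OF \<open>A k k = 2\<close>])
      finally have "w \<simeq> w2" by simp
      moreover obtain w2' where "w2 \<simeq> w2'" "set w2' \<subseteq> {i. pair i lam = 0}"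
        using less.hyps[of w2] less.prems Cons w2(2) act_W_eq[OF \<open>w \<simeq> w2\<close>] by auto
      ultimately show ?thesis by (blast intro: W_eq.trans)
    qed
  qed
qed

lemma W_eq_parabolic_word_imp_fixed:
  assumes "w \<simeq> w'" "set w' \<subseteq> {i. pair i lam = 0}"
  shows "act w lam = lam"
proof -
  have "act w' lam = lam" using assms(2)
    by (induction w') (auto simp: refl_int_def)
  then show ?thesis using act_W_eq[OF assms(1)] by simp
qed

end

theorem lemma2p2p11:
  fixes A :: "'i::countable \<Rightarrow> 'i \<Rightarrow> int"
    and cor rt :: "'i \<Rightarrow> 'b \<Rightarrow> int"
    and lam :: "'b \<Rightarrow> int"
  assumes "BC_matrix A"
    and "is_datum A cor rt"
    and "\<forall>i. pairZ (cor i) lam \<ge> 0"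
  shows "{w. word_act cor rt w (of_int \<circ> lam) = of_int \<circ> lam}
       = {w. \<exists>w'. W_eq A cor rt w w' \<and> set w' \<subseteq> {i. pairZ (cor i) lam = 0}}"
proof -
  interpret dominant_weight A cor rt lam
    using assms by unfold_locales
  have "word_act cor rt w (of_int \<circ> lam) = of_int \<circ> lam \<longleftrightarrow> word_act_int cor rt w lam = lam" for w
    by (simp add: word_act_of_int fun_eq_iff)
  then show ?thesis
    using fixed_imp_W_eq_parabolic_word W_eq_parabolic_word_imp_fixed by auto
qed

end
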